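(* Let $b\ge 2$ and $n\ge 0$ be integers. Then $b\,s_{n+1}\notin \mathrm{Ap}(T_b(n),s_0)$.
   Context: For integers $b\ge 2$, $n\ge 0$, $i\ge0$ put $s_i=(b+1)b^{n+i}-1$ and $T_b(n)=\langle\{s_i:i\in\mathbb{N}\}\rangle$ (a numerical semigroup). For a numerical semigroup $S$ and $x\in S\setminus\{0\}$, $\mathrm{Ap}(S,x)=\{s\in S: s-x\notin S\}$. *)

theory Defs
  imports Main
begin

inductive_set gen_monoid :: "nat set \<Rightarrow> nat set" for A :: "nat set" where
  zero: "0 \<in> gen_monoid A"
| add_gen: "a \<in> A \<Longrightarrow> x \<in> gen_monoid A \<Longrightarrow> a + x \<in> gen_monoid A"

definition s_seq :: "nat \<Rightarrow> nat \<Rightarrow> nat \<Rightarrow> nat" where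
  "s_seq b n i = (b + 1) * b ^ (n + i) - 1"

definition T_sg :: "nat \<Rightarrow> nat \<Rightarrow> nat set" where
  "T_sg b n = gen_monoid (range (s_seq b n))"

text \<open>Apery set: elements s of S with s - x not in S (as an integer; negative values are not in S).\<close>
definition Apery :: "nat set \<Rightarrow> nat \<Rightarrow> nat set" where
  "Apery S x = {s \<in> S. \<not> (x \<le> s \<and> s - x \<in> S)}"

end

theory Submission
  imports Defs
begin

text \<open>With \<open>B = b ^ n\<close> one has \<open>s\<^sub>0 = (b+1)B - 1\<close>, \<open>s\<^sub>n = (b+1)B\<^sup>2 - 1\<close> and
  \<open>s\<^sub>n\<^sub>+\<^sub>1 = (b+1)B\<^sup>2b - 1\<close>, and a direct computation gives
  \<open>b s\<^sub>n\<^sub>+\<^sub>1 = s\<^sub>0 + (k s\<^sub>0 + s\<^sub>n)\<close> with \<open>k = B(b\<^sup>2 - 1) + b - 2 \<ge> 0\<close>.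
  Hence \<open>b s\<^sub>n\<^sub>+\<^sub>1 - s\<^sub>0\<close> is a sum of generators, so \<open>b s\<^sub>n\<^sub>+\<^sub>1\<close> is not in the Apery set.\<close>

lemma gen_monoid_mult_add:
  assumes "a \<in> A" and "x \<in> gen_monoid A"
  shows "m * a + x \<in> gen_monoid A"
proof (induction m)
  case 0
  then show ?case using assms(2) by simp
next
  case (Suc m)
  then have "a + (m * a + x) \<in> gen_monoid A"
    using assms(1) gen_monoid.add_gen by blast
  then show ?case by (simp add: add.assoc)
qed

lemma add_notin_Apery:
  assumes "y \<in> S"
  shows "x + y \<notin> Apery S x"
  using assms by (simp add: Apery_def)

lemma of_nat_s_seq:
  assumes "b \<ge> 1"
  shows "int (s_seq b n i) = (int b + 1) * int b ^ (n + i) - 1"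
proof -
  have "1 \<le> b ^ (n + i)" using assms by (rule one_le_power)
  then have "1 \<le> (b + 1) * b ^ (n + i)" by (simp add: add_increasing)
  then show ?thesis by (simp add: s_seq_def of_nat_diff algebra_simps)
qed

lemma s_seq_Suc_decomposition:
  fixes b n :: nat
  assumes "b \<ge> 2"
  shows "b * s_seq b n (n + 1)
       = s_seq b n 0 + ((b ^ n * (b\<^sup>2 - 1) + b - 2) * s_seq b n 0 + s_seq b n n)"
proof -
  define k where "k = b ^ n * (b\<^sup>2 - 1) + b - 2"
  have b1: "b \<ge> 1" using assms by simp
  have k: "int k = int b ^ n * (int b ^ 2 - 1) + int b - 2"
    using assms by (simp add: k_def of_nat_diff)
  have "int (b * s_seq b n (n + 1)) = int (s_seq b n 0 + (k * s_seq b n 0 + s_seq b n n))"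
    unfolding of_nat_add of_nat_mult of_nat_s_seq[OF b1] k
    by (simp add: power_add algebra_simps power2_eq_square)
  then show ?thesis by (simp only: of_nat_eq_iff k_def)
qed

theorem mainTheorem9:
  fixes b n :: nat
  assumes "b \<ge> 2"
  shows "b * s_seq b n (n + 1) \<notin> Apery (T_sg b n) (s_seq b n 0)"
proof -
  let ?k = "b ^ n * (b\<^sup>2 - 1) + b - 2"
  have "s_seq b n n + 0 \<in> gen_monoid (range (s_seq b n))"
    by (rule gen_monoid.add_gen) (auto intro: gen_monoid.zero)
  then have "?k * s_seq b n 0 + s_seq b n n \<in> T_sg b n"
    unfolding T_sg_def by (intro gen_monoid_mult_add) auto
  then show ?thesis
    unfolding s_seq_Suc_decomposition[OF assms] by (rule add_notin_Apery)
qed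

end
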